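(* Let $d,D$ be positive integers, $\Omega(d)=\{\ket{\varphi}\bra{\varphi}:\ket{\varphi}\in\mathbb{C}^d,\ \langle\varphi|\varphi\rangle=1\}$, $\mu$ a Borel probability measure on $\Omega(d)$ and $F$ a continuous function on $\Omega(d)$ whose values are Hermitian operators on $\mathbb{C}^D$, such that \[ \int\mathrm{d}\mu(\varphi)\,F(\varphi)\otimes\ket{\varphi}\bra{\varphi}^{\otimes N}\ge0\quad\text{for all } N\in\mathbb{N}. \] Then $F(\varphi)$ is positive semidefinite for $\mu$-almost every $\varphi$.
   Context: Points $\varphi\in\Omega(d)$ are identified with projectors $\ket{\varphi}\bra{\varphi}$; $\ge0$ means positive semidefinite as an operator on $\mathbb{C}^D\otimes(\mathbb{C}^d)^{\otimes N}$. *)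

theory Defs
  imports "HOL-Analysis.Analysis" "HOL-Probability.Probability"
begin

definition proj :: "complex^'d \<Rightarrow> complex^'d^'d" where
  "proj phi = (\<chi> i j. phi $ i * cnj (phi $ j))"

definition Omega :: "(complex^'d^'d) set" where
  "Omega = {proj phi | phi :: complex^'d. norm phi = 1}"

definition hermitian_mat :: "complex^'n^'n \<Rightarrow> bool" where
  "hermitian_mat A \<longleftrightarrow> (\<forall>i j. A $ i $ j = cnj (A $ j $ i))"

definition psd_on :: "'i set \<Rightarrow> ('i \<Rightarrow> 'i \<Rightarrow> complex) \<Rightarrow> bool" where
  "psd_on I M \<longleftrightarrow> (\<forall>v :: 'i \<Rightarrow> complex.
     let q = (\<Sum>i\<in>I. \<Sum>j\<in>I. cnj (v i) * M i j * v j) in Im q = 0 \<and> Re q \<ge> 0)"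

definition psd_mat :: "complex^'n^'n \<Rightarrow> bool" where
  "psd_mat A \<longleftrightarrow> psd_on UNIV (\<lambda>i j. A $ i $ j)"

text \<open>Index set of C^D \<otimes> (C^d)^{\<otimes>N}: pairs (a, is) with is a word of length N over 'd.\<close>
definition tidx :: "nat \<Rightarrow> ('D \<times> 'd list) set" where
  "tidx N = UNIV \<times> {is. length is = N}"

text \<open>Matrix entries of A \<otimes> P^{\<otimes>N} in the product basis.\<close>
definition kron_tpow :: "complex^'D^'D \<Rightarrow> complex^'d^'d \<Rightarrow> nat \<Rightarrow>
    ('D \<times> 'd list) \<Rightarrow> ('D \<times> 'd list) \<Rightarrow> complex" where
  "kron_tpow A P N x y =
     A $ fst x $ fst y * (\<Prod>k<N. P $ (snd x ! k) $ (snd y ! k))"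

end

theory Submission
  imports Defs
begin

(*
  Fix a projector P0 = |psi><psi| at which F(P0) is not positive semidefinite, say
  <v, F(P0) v> < 0. Testing the hypothesis on v (x) psi^(x)N gives
  0 <= \<integral> f(P) w(P)^N d\<mu>(P), where f(P) = <v, F(P) v> is continuous and real and
  w(P) = <psi, P psi> = 1 - |P - P0|^2/2 lies in [0,1], equals 1 only at P0 and is bounded
  away from 1 outside any ball around P0. Near P0 the integrand is negative, so as N grows
  the ball contributes -c A^N \<mu>(ball) while the rest is O(B^N) with B < A; hence
  \<mu>(ball) = 0. Every such P0 thus has a null neighbourhood, and by Lindeloef countably many
  of them cover the set where F is not positive semidefinite.
*)

lemma sum_words_prod_power:
  fixes g :: "'a::finite \<Rightarrow> 'a \<Rightarrow> 'b::comm_semiring_1"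
  shows "(\<Sum>is\<in>{is. length is = N}. \<Sum>js\<in>{js. length js = N}. \<Prod>k<N. g (is!k) (js!k))
    = (\<Sum>i\<in>UNIV. \<Sum>j\<in>UNIV. g i j) ^ N"
proof (induction N)
  case 0
  then show ?case by simp
next
  case (Suc n)
  let ?W = "{xs::'a list. length xs = n}"
  have words_Suc: "{xs. length xs = Suc n} = (\<lambda>(x, xs). x # xs) ` (UNIV \<times> ?W)"
    by (auto simp: length_Suc_conv image_iff)
  have inj: "inj_on (\<lambda>(x, xs). x # xs) (UNIV \<times> ?W)"
    by (auto simp: inj_on_def)
  have "(\<Sum>is\<in>{is. length is = Suc n}. \<Sum>js\<in>{js. length js = Suc n}. \<Prod>k<Suc n. g (is!k) (js!k))
      = (\<Sum>(x, xs)\<in>UNIV \<times> ?W. \<Sum>(y, ys)\<in>UNIV \<times> ?W. g x y * (\<Prod>k<n. g (xs!k) (ys!k)))"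
    unfolding words_Suc sum.reindex[OF inj]
    by (simp add: case_prod_beta prod.lessThan_Suc_shift del: prod.lessThan_Suc)
  also have "\<dots> = (\<Sum>x\<in>UNIV. \<Sum>xs\<in>?W. \<Sum>y\<in>UNIV. \<Sum>ys\<in>?W. g x y * (\<Prod>k<n. g (xs!k) (ys!k)))"
    by (simp add: sum.cartesian_product[symmetric])
  also have "\<dots> = (\<Sum>x\<in>UNIV. \<Sum>y\<in>UNIV. g x y *
      (\<Sum>xs\<in>?W. \<Sum>ys\<in>?W. \<Prod>k<n. g (xs!k) (ys!k)))"
    by (simp add: sum_distrib_left sum.swap[of _ ?W UNIV])
  also have "\<dots> = (\<Sum>i\<in>UNIV. \<Sum>j\<in>UNIV. g i j) ^ Suc n"
    by (simp add: Suc.IH sum_distrib_right)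
  finally show ?case .
qed

definition qform :: "('n::finite \<Rightarrow> complex) \<Rightarrow> complex^'n^'n \<Rightarrow> complex" where
  "qform v A = (\<Sum>i\<in>UNIV. \<Sum>j\<in>UNIV. cnj (v i) * A $ i $ j * v j)"

definition kron_tpow_vec :: "('D \<Rightarrow> complex) \<Rightarrow> ('d \<Rightarrow> complex) \<Rightarrow> nat \<Rightarrow>
    ('D \<times> 'd list) \<Rightarrow> complex" where
  "kron_tpow_vec v \<psi> N x = v (fst x) * (\<Prod>k<N. \<psi> (snd x ! k))"

lemma qform_kron_tpow:
  fixes A :: "complex^'D::finite^'D" and P :: "complex^'d::finite^'d"
  shows "(\<Sum>x\<in>tidx N. \<Sum>y\<in>tidx N.
      cnj (kron_tpow_vec v \<psi> N x) * kron_tpow A P N x y * kron_tpow_vec v \<psi> N y)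
    = qform v A * qform \<psi> P ^ N"
proof -
  let ?W = "{is::'d list. length is = N}"
  have sum_tidx: "(\<Sum>x\<in>tidx N. f x) = (\<Sum>a\<in>UNIV. \<Sum>is\<in>?W. f (a, is))" for f :: "_ \<Rightarrow> complex"
    by (simp add: tidx_def sum.cartesian_product)
  have "(\<Sum>x\<in>tidx N. \<Sum>y\<in>tidx N.
      cnj (kron_tpow_vec v \<psi> N x) * kron_tpow A P N x y * kron_tpow_vec v \<psi> N y)
     = (\<Sum>a\<in>UNIV. \<Sum>is\<in>?W. \<Sum>b\<in>UNIV. \<Sum>js\<in>?W. (cnj (v a) * A $ a $ b * v b) *
          (\<Prod>k<N. cnj (\<psi> (is!k)) * P $ (is!k) $ (js!k) * \<psi> (js!k)))"
    unfolding sum_tidx kron_tpow_vec_def kron_tpow_def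
    by (simp add: prod.distrib sum_distrib_left sum.swap[of _ ?W UNIV] mult_ac)
  also have "\<dots> = (\<Sum>a\<in>UNIV. \<Sum>b\<in>UNIV. (cnj (v a) * A $ a $ b * v b) * (\<Sum>is\<in>?W. \<Sum>js\<in>?W.
          \<Prod>k<N. cnj (\<psi> (is!k)) * P $ (is!k) $ (js!k) * \<psi> (js!k)))"
    by (simp add: sum_distrib_left sum.swap[of _ ?W UNIV])
  also have "\<dots> = qform v A * qform \<psi> P ^ N"
    using sum_words_prod_power[of "\<lambda>i j. cnj (\<psi> i) * P $ i $ j * \<psi> j" N]
    by (simp add: qform_def sum_distrib_right)
  finally show ?thesis .
qed

lemma qform_hermitian_real: "hermitian_mat A \<Longrightarrow> qform v A \<in> \<real>"
proof -
  assume "hermitian_mat A"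
  then have cnj_entry: "cnj (A $ i $ j) = A $ j $ i" for i j
    unfolding hermitian_mat_def by (metis complex_cnj_cnj)
  have "cnj (qform v A) = (\<Sum>i\<in>UNIV. \<Sum>j\<in>UNIV. v i * A $ j $ i * cnj (v j))"
    unfolding qform_def by (simp add: cnj_entry)
  also have "\<dots> = qform v A"
    unfolding qform_def by (subst sum.swap) (simp add: mult_ac)
  finally show ?thesis
    by (simp add: Reals_cnj_iff)
qed

lemma psd_mat_iff_qform:
  "hermitian_mat A \<Longrightarrow> psd_mat A \<longleftrightarrow> (\<forall>v. 0 \<le> Re (qform v A))"
  unfolding psd_mat_def psd_on_def Let_def qform_def[symmetric]
  by (metis qform_hermitian_real complex_is_Real_iff)

lemma norm_vec_sq: "norm x ^ 2 = (\<Sum>i\<in>UNIV. norm (x $ i) ^ 2)"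
  for x :: "'a::real_normed_vector^'n::finite"
  by (simp add: norm_vec_def L2_set_def sum_nonneg)

lemma of_real_norm_vec_sq: "complex_of_real (norm x ^ 2) = (\<Sum>i\<in>UNIV. x $ i * cnj (x $ i))"
  for x :: "complex^'n::finite"
  unfolding norm_vec_sq of_real_sum by (simp only: complex_norm_square)

lemma of_real_norm_mat_sq:
  "complex_of_real (norm X ^ 2) = (\<Sum>i\<in>UNIV. \<Sum>j\<in>UNIV. X $ i $ j * cnj (X $ i $ j))"
  for X :: "complex^'n::finite^'m::finite"
  unfolding norm_vec_sq[of X] of_real_sum of_real_norm_vec_sq ..

lemma qform_proj:
  "qform (($) \<psi>) (proj \<phi>) = complex_of_real (cmod (\<Sum>i\<in>UNIV. cnj (\<psi> $ i) * \<phi> $ i) ^ 2)"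
  for \<phi> \<psi> :: "complex^'n::finite"
  unfolding complex_norm_square
  by (simp add: qform_def proj_def sum_product mult_ac)

lemma norm_proj_diff_sq:
  fixes \<phi> \<psi> :: "complex^'n::finite"
  assumes "norm \<phi> = 1" "norm \<psi> = 1"
  shows "norm (proj \<phi> - proj \<psi>) ^ 2 = 2 - 2 * cmod (\<Sum>i\<in>UNIV. cnj (\<psi> $ i) * \<phi> $ i) ^ 2"
proof -
  let ?S = "\<Sum>i\<in>UNIV. cnj (\<psi> $ i) * \<phi> $ i"
  have unit: "(\<Sum>i\<in>UNIV. \<phi> $ i * cnj (\<phi> $ i)) = 1" "(\<Sum>i\<in>UNIV. \<psi> $ i * cnj (\<psi> $ i)) = 1"
    using of_real_norm_vec_sq[of \<phi>] of_real_norm_vec_sq[of \<psi>] assms by simp_all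
  have "complex_of_real (norm (proj \<phi> - proj \<psi>) ^ 2)
     = (\<Sum>i\<in>UNIV. \<Sum>j\<in>UNIV. (\<phi>$i * cnj (\<phi>$j) - \<psi>$i * cnj (\<psi>$j)) * cnj (\<phi>$i * cnj (\<phi>$j) - \<psi>$i * cnj (\<psi>$j)))"
    unfolding of_real_norm_mat_sq by (simp add: proj_def)
  also have "\<dots> = (\<Sum>i\<in>UNIV. \<phi>$i * cnj (\<phi>$i)) * (\<Sum>i\<in>UNIV. \<phi>$i * cnj (\<phi>$i))
     + (\<Sum>i\<in>UNIV. \<psi>$i * cnj (\<psi>$i)) * (\<Sum>i\<in>UNIV. \<psi>$i * cnj (\<psi>$i)) - 2 * (?S * cnj ?S)"
    by (simp add: sum_product algebra_simps sum.distrib sum_subtractf, subst sum.swap, simp add: mult_ac)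
  also have "\<dots> = complex_of_real (2 - 2 * cmod ?S ^ 2)"
    unfolding unit of_real_diff of_real_mult complex_norm_square by simp
  finally show ?thesis
    using of_real_eq_iff by blast
qed

lemma qform_proj_Omega:
  fixes \<psi> :: "complex^'n::finite"
  assumes "norm \<psi> = 1" "P \<in> Omega"
  shows "qform (($) \<psi>) P = complex_of_real (1 - dist P (proj \<psi>) ^ 2 / 2)"
proof -
  obtain \<phi> where \<phi>: "norm \<phi> = 1" "P = proj \<phi>"
    using assms(2) unfolding Omega_def by auto
  then have "1 - dist P (proj \<psi>) ^ 2 / 2 = cmod (\<Sum>i\<in>UNIV. cnj (\<psi> $ i) * \<phi> $ i) ^ 2"
    using norm_proj_diff_sq[of \<phi> \<psi>] assms(1) by (simp add: dist_norm field_simps)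
  then show ?thesis
    by (simp add: \<phi>(2) qform_proj)
qed

lemma dist_Omega_sq_le: "P \<in> Omega \<Longrightarrow> Q \<in> Omega \<Longrightarrow> dist P Q ^ 2 \<le> 2"
  by (auto simp: Omega_def dist_norm norm_proj_diff_sq)

lemma continuous_on_proj: "continuous_on S proj"
  unfolding proj_def by (intro continuous_intros continuous_on_cnj)

lemma compact_Omega: "compact (Omega :: (complex^'n::finite^'n) set)"
proof -
  have "Omega = (proj :: complex^'n \<Rightarrow> _) ` sphere 0 1"
    unfolding Omega_def by auto
  then show ?thesis
    by (metis compact_continuous_image[OF continuous_on_proj compact_sphere])
qed

lemma integrable_continuous_on_compact:
  fixes g :: "'a::topological_space \<Rightarrow> 'b::{banach, second_countable_topology}"
  assumes "finite_measure \<mu>" and space: "space \<mu> = \<Omega>"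
    and sets: "sets \<mu> = sets (restrict_space borel \<Omega>)"
    and "compact \<Omega>" and cont: "continuous_on \<Omega> g"
  shows "integrable \<mu> g"
proof -
  interpret finite_measure \<mu> by fact
  have "g \<in> borel_measurable \<mu>"
    unfolding measurable_cong_sets[OF sets refl] by (rule borel_measurable_continuous_on_restrict[OF cont])
  moreover obtain B where "\<forall>x\<in>\<Omega>. norm (g x) \<le> B"
    using compact_imp_bounded[OF compact_continuous_image[OF cont \<open>compact \<Omega>\<close>]]
    by (auto simp: bounded_iff)
  ultimately show ?thesis
    using space by (intro integrable_const_bound[where B=B]) auto
qed

lemma nonpos_if_bounded_by_slower_powers:
  fixes A B c K m :: real
  assumes "0 < B" "B < A" "0 < c" and bound: "\<And>N. c * A ^ N * m \<le> K * B ^ N"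
  shows "m \<le> 0"
proof (rule LIMSEQ_le_const)
  show "(\<lambda>N. K / c * (B / A) ^ N) \<longlonglongrightarrow> 0"
    using assms(1-3) by (intro tendsto_mult_right_zero LIMSEQ_power_zero) auto
  have "m \<le> K / c * (B / A) ^ N" for N
    using bound[of N] assms(1-3) by (simp add: field_simps)
  then show "\<exists>N. \<forall>n\<ge>N. m \<le> K / c * (B / A) ^ n"
    by blast
qed

lemma mult_power_le_neg_power:
  fixes f w A c :: real
  assumes "f \<le> - c" "0 \<le> c" "0 \<le> A" "A \<le> w"
  shows "f * w ^ N \<le> - c * A ^ N"
proof -
  have "A ^ N \<le> w ^ N"
    using assms(4,3) by (rule power_mono)
  have "f * w ^ N \<le> - c * w ^ N"
    using assms by (intro mult_right_mono) auto
  also have "\<dots> \<le> - c * A ^ N"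
    using \<open>A ^ N \<le> w ^ N\<close> assms(2) by (simp add: mult_left_mono)
  finally show ?thesis .
qed

lemma mult_power_le_const_power:
  fixes f w B K :: real
  assumes "\<bar>f\<bar> \<le> K" "0 \<le> w" "0 \<le> B" "f \<le> 0 \<or> w \<le> B"
  shows "f * w ^ N \<le> K * B ^ N"
proof (cases "f \<le> 0")
  case True
  have "f * w ^ N \<le> 0"
    using True assms(2) by (simp add: mult_nonpos_nonneg)
  also have "0 \<le> K * B ^ N"
    using assms(1,3) by simp
  finally show ?thesis .
next
  case False
  then have "w ^ N \<le> B ^ N"
    using assms(2,4) by (auto intro: power_mono)
  then show ?thesis
    using assms(1,2) by (intro mult_mono) auto
qed

lemma null_if_weighted_moments_nonneg:
  fixes f w :: "'a \<Rightarrow> real"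
  assumes "finite_measure \<mu>" and space: "space \<mu> = \<Omega>" and U: "U \<in> sets \<mu>"
    and integrable: "\<And>N. integrable \<mu> (\<lambda>P. f P * w P ^ N)"
    and moments: "\<And>N. 0 \<le> (\<integral>P. f P * w P ^ N \<partial>\<mu>)"
    and AB: "0 < B" "B < A" and "0 < c"
    and w_nonneg: "\<And>P. P \<in> \<Omega> \<Longrightarrow> 0 \<le> w P"
    and inside: "\<And>P. P \<in> U \<Longrightarrow> f P \<le> - c \<and> A \<le> w P"
    and outside: "\<And>P. P \<in> \<Omega> - U \<Longrightarrow> f P \<le> 0 \<or> w P \<le> B"
    and K: "\<And>P. P \<in> \<Omega> \<Longrightarrow> \<bar>f P\<bar> \<le> K"
  shows "U \<in> null_sets \<mu>"
proof -
  interpret finite_measure \<mu> by fact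
  have U_sub: "U \<subseteq> \<Omega>"
    using sets.sets_into_space[OF U] space by simp
  have bound: "f P * w P ^ N \<le> K * B ^ N - c * A ^ N * indicator U P" if "P \<in> \<Omega>" for P N
  proof (cases "P \<in> U")
    case True
    then have "f P * w P ^ N \<le> - c * A ^ N"
      using inside AB \<open>0 < c\<close> by (intro mult_power_le_neg_power) auto
    moreover have "0 \<le> K * B ^ N"
      using K[OF that] AB by (meson abs_ge_zero order_trans zero_le_mult_iff zero_le_power less_imp_le)
    ultimately show ?thesis
      using True by simp
  next
    case False
    have "f P * w P ^ N \<le> K * B ^ N"
      using K outside w_nonneg that False AB by (intro mult_power_le_const_power) auto
    then show ?thesis
      using False by simp
  qed
  have "c * A ^ N * measure \<mu> U \<le> K * measure \<mu> \<Omega> * B ^ N" for N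
  proof -
    have "0 \<le> (\<integral>P. f P * w P ^ N \<partial>\<mu>)"
      by (rule moments)
    also have "\<dots> \<le> (\<integral>P. K * B ^ N - c * A ^ N * indicator U P \<partial>\<mu>)"
      using bound space U by (intro integral_mono integrable) (auto simp: less_top[symmetric])
    also have "\<dots> = K * B ^ N * measure \<mu> \<Omega> - c * A ^ N * measure \<mu> U"
      using U U_sub space
      by (subst Bochner_Integration.integral_diff) (auto simp: less_top[symmetric] Int_absorb2)
    finally show ?thesis
      by (simp add: algebra_simps)
  qed
  then have "measure \<mu> U \<le> 0"
    using AB \<open>0 < c\<close> by (intro nonpos_if_bounded_by_slower_powers[of B A c]) auto
  then show ?thesis
    using U by (simp add: null_sets_def emeasure_eq_measure measure_le_0_iff)
qed

lemma null_ball_if_moments_nonneg: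
  fixes \<mu> :: "'a::metric_space measure" and f :: "'a \<Rightarrow> real"
  assumes \<mu>: "finite_measure \<mu>" and space: "space \<mu> = \<Omega>"
    and sets: "sets \<mu> = sets (restrict_space borel \<Omega>)"
    and "compact \<Omega>" and cont: "continuous_on \<Omega> f"
    and P0: "P0 \<in> \<Omega>" and neg: "f P0 < 0"
    and diam: "\<And>P. P \<in> \<Omega> \<Longrightarrow> dist P P0 ^ 2 \<le> 2"
    and moments: "\<And>N. 0 \<le> (\<integral>P. f P * (1 - dist P P0 ^ 2 / 2) ^ N \<partial>\<mu>)"
  shows "\<exists>r>0. ball P0 r \<inter> \<Omega> \<in> null_sets \<mu>"
proof -
  define c where "c = - f P0 / 2"
  have "0 < c"
    using neg by (simp add: c_def)
  obtain e where e: "0 < e" "e \<le> 1" and f_neg: "\<And>P. P \<in> \<Omega> \<Longrightarrow> dist P P0 < e \<Longrightarrow> f P < - c"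
  proof -
    obtain \<delta> where "0 < \<delta>" "\<forall>P\<in>\<Omega>. dist P P0 < \<delta> \<longrightarrow> dist (f P) (f P0) < c"
      using cont P0 \<open>0 < c\<close> unfolding continuous_on_iff by metis
    then show thesis
      by (intro that[of "min \<delta> 1"]) (auto simp: c_def dist_real_def)
  qed
  obtain K where K: "\<And>P. P \<in> \<Omega> \<Longrightarrow> \<bar>f P\<bar> \<le> K"
    using compact_imp_bounded[OF compact_continuous_image[OF cont \<open>compact \<Omega>\<close>]]
    by (auto simp: bounded_iff)
  define w where "w P = 1 - dist P P0 ^ 2 / 2" for P
  have "e ^ 2 \<le> 1" "0 < e ^ 2"
    using e by (auto simp: power_le_one)
  have "ball P0 (e / 2) \<inter> \<Omega> \<in> null_sets \<mu>"
  proof (rule null_if_weighted_moments_nonneg[OF \<mu> space, where w = w and c = c and K = K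
        and A = "1 - e ^ 2 / 8" and B = "1 - e ^ 2 / 2"])
    show "ball P0 (e / 2) \<inter> \<Omega> \<in> sets \<mu>"
      unfolding sets sets_restrict_space by auto
    show "integrable \<mu> (\<lambda>P. f P * w P ^ N)" for N
      unfolding w_def
      by (intro integrable_continuous_on_compact[OF \<mu> space sets \<open>compact \<Omega>\<close>] continuous_intros cont)
        auto
    show "0 \<le> (\<integral>P. f P * w P ^ N \<partial>\<mu>)" for N
      unfolding w_def by (rule moments)
    show "0 < 1 - e ^ 2 / 2" "1 - e ^ 2 / 2 < 1 - e ^ 2 / 8"
      using \<open>e ^ 2 \<le> 1\<close> \<open>0 < e ^ 2\<close> by auto
    show "0 \<le> w P" if "P \<in> \<Omega>" for P
      using diam[OF that] by (simp add: w_def)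
    show "f P \<le> - c \<and> 1 - e ^ 2 / 8 \<le> w P" if "P \<in> ball P0 (e / 2) \<inter> \<Omega>" for P
    proof
      have "dist P P0 ^ 2 \<le> (e / 2) ^ 2"
        using that by (intro power_mono) (auto simp: dist_commute)
      then show "1 - e ^ 2 / 8 \<le> w P"
        by (simp add: w_def power_divide)
      show "f P \<le> - c"
        using that f_neg[of P] e by (auto simp: dist_commute)
    qed
    show "f P \<le> 0 \<or> w P \<le> 1 - e ^ 2 / 2" if "P \<in> \<Omega> - ball P0 (e / 2) \<inter> \<Omega>" for P
    proof (cases "dist P P0 < e")
      case True
      then show ?thesis
        using that f_neg[of P] \<open>0 < c\<close> by force
    next
      case False
      then have "e ^ 2 \<le> dist P P0 ^ 2"
        using e by (intro power_mono) auto
      then show ?thesis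
        by (simp add: w_def)
    qed
  qed (fact \<open>0 < c\<close> K)+
  then show ?thesis
    using e by (intro exI[of _ "e / 2"]) auto
qed

lemma AE_if_null_neighbourhoods:
  fixes \<mu> :: "'a::second_countable_topology measure"
  assumes space: "space \<mu> = \<Omega>"
    and null_nhd: "\<And>x. x \<in> \<Omega> \<Longrightarrow> \<not> Q x \<Longrightarrow> \<exists>U. open U \<and> x \<in> U \<and> U \<inter> \<Omega> \<in> null_sets \<mu>"
  shows "AE x in \<mu>. Q x"
proof -
  define \<U> where "\<U> = {U. open U \<and> U \<inter> \<Omega> \<in> null_sets \<mu>}"
  obtain \<U>' where \<U>': "\<U>' \<subseteq> \<U>" "countable \<U>'" "\<Union>\<U>' = \<Union>\<U>"
    using Lindelof[of \<U>] unfolding \<U>_def by blast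
  have "(\<Union>U\<in>\<U>'. U \<inter> \<Omega>) \<in> null_sets \<mu>"
    using \<U>' by (intro null_sets_UN') (auto simp: \<U>_def)
  moreover have "{x \<in> space \<mu>. \<not> Q x} \<subseteq> (\<Union>U\<in>\<U>'. U \<inter> \<Omega>)"
    using null_nhd \<U>'(3) space unfolding \<U>_def by blast
  ultimately show ?thesis
    by (rule AE_I')
qed

lemma moments_qform_nonneg:
  fixes \<mu> :: "(complex^'d::finite^'d) measure" and F :: "complex^'d^'d \<Rightarrow> complex^'D::finite^'D"
    and \<psi> :: "complex^'d"
  assumes \<mu>: "finite_measure \<mu>" and space: "space \<mu> = Omega"
    and sets: "sets \<mu> = sets (restrict_space borel Omega)"
    and cont: "continuous_on Omega F"
    and herm: "\<forall>\<phi>\<in>Omega. hermitian_mat (F \<phi>)"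
    and pos: "\<forall>N::nat. psd_on (tidx N) (\<lambda>x y. \<integral>\<phi>. kron_tpow (F \<phi>) \<phi> N x y \<partial>\<mu>)"
    and \<psi>: "norm \<psi> = 1"
  shows "0 \<le> (\<integral>P. Re (qform v (F P)) * (1 - dist P (proj \<psi>) ^ 2 / 2) ^ N \<partial>\<mu>)"
proof -
  let ?V = "kron_tpow_vec v (($) \<psi>) N"
  have integrable: "integrable \<mu> (\<lambda>P. kron_tpow (F P) P N x y)" for x y
    unfolding kron_tpow_def
    by (intro integrable_continuous_on_compact[OF \<mu> space sets compact_Omega] continuous_intros cont)
  have "(\<Sum>x\<in>tidx N. \<Sum>y\<in>tidx N. cnj (?V x) * (\<integral>P. kron_tpow (F P) P N x y \<partial>\<mu>) * ?V y)
      = (\<integral>P. (\<Sum>x\<in>tidx N. \<Sum>y\<in>tidx N. cnj (?V x) * kron_tpow (F P) P N x y * ?V y) \<partial>\<mu>)"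
    by (simp add: integrable integrable_sum)
  also have "\<dots> = (\<integral>P. complex_of_real (Re (qform v (F P)) * (1 - dist P (proj \<psi>) ^ 2 / 2) ^ N) \<partial>\<mu>)"
  proof (rule Bochner_Integration.integral_cong[OF refl])
    fix P
    assume "P \<in> space \<mu>"
    then have "P \<in> Omega"
      using space by simp
    have "qform v (F P) \<in> \<real>"
      using herm \<open>P \<in> Omega\<close> qform_hermitian_real by blast
    then show "(\<Sum>x\<in>tidx N. \<Sum>y\<in>tidx N. cnj (?V x) * kron_tpow (F P) P N x y * ?V y)
        = complex_of_real (Re (qform v (F P)) * (1 - dist P (proj \<psi>) ^ 2 / 2) ^ N)"
      unfolding qform_kron_tpow qform_proj_Omega[OF \<psi> \<open>P \<in> Omega\<close>] by simp
  qed
  finally have "(\<Sum>x\<in>tidx N. \<Sum>y\<in>tidx N. cnj (?V x) * (\<integral>P. kron_tpow (F P) P N x y \<partial>\<mu>) * ?V y)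
      = complex_of_real (\<integral>P. Re (qform v (F P)) * (1 - dist P (proj \<psi>) ^ 2 / 2) ^ N \<partial>\<mu>)"
    by (simp only: integral_complex_of_real)
  moreover have "0 \<le> Re (\<Sum>x\<in>tidx N. \<Sum>y\<in>tidx N. cnj (?V x) * (\<integral>P. kron_tpow (F P) P N x y \<partial>\<mu>) * ?V y)"
    using pos unfolding psd_on_def Let_def by blast
  ultimately show ?thesis
    by simp
qed

theorem corollary3:
  fixes \<mu> :: "(complex^'d^'d) measure"
    and F :: "complex^'d^'d \<Rightarrow> complex^'D^'D"
  assumes prob: "prob_space \<mu>"
    and space: "space \<mu> = Omega"
    and sets: "sets \<mu> = sets (restrict_space borel Omega)"
    and cont: "continuous_on Omega F"
    and herm: "\<forall>\<phi>\<in>Omega. hermitian_mat (F \<phi>)"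
    and pos: "\<forall>N::nat. psd_on (tidx N)
                 (\<lambda>x y. integral\<^sup>L \<mu> (\<lambda>\<phi>. kron_tpow (F \<phi>) \<phi> N x y))"
  shows "AE \<phi> in \<mu>. psd_mat (F \<phi>)"
proof (rule AE_if_null_neighbourhoods[OF space])
  fix P0
  assume P0: "P0 \<in> Omega" and "\<not> psd_mat (F P0)"
  then obtain v where v: "Re (qform v (F P0)) < 0"
    using psd_mat_iff_qform herm by (meson not_le)
  obtain \<psi> :: "complex^'d" where \<psi>: "norm \<psi> = 1" "P0 = proj \<psi>"
    using P0 unfolding Omega_def by auto
  have fin: "finite_measure \<mu>"
    using prob by (rule prob_space.finite_measure)
  have "\<exists>r>0. ball P0 r \<inter> Omega \<in> null_sets \<mu>"
  proof (rule null_ball_if_moments_nonneg[where f = "\<lambda>P. Re (qform v (F P))",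
        OF fin space sets compact_Omega _ P0 v dist_Omega_sq_le[OF _ P0]])
    show "continuous_on Omega (\<lambda>P. Re (qform v (F P)))"
      unfolding qform_def by (intro continuous_intros cont)
    show "0 \<le> (\<integral>P. Re (qform v (F P)) * (1 - dist P P0 ^ 2 / 2) ^ N \<partial>\<mu>)" for N
      unfolding \<psi>(2) by (rule moments_qform_nonneg[OF fin space sets cont herm pos \<psi>(1)])
  qed
  then show "\<exists>U. open U \<and> P0 \<in> U \<and> U \<inter> Omega \<in> null_sets \<mu>"
    by (meson centre_in_ball open_ball)
qed

end
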